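(* Let $p\neq 2$ and $q\neq 2$ be primes and let $\lambda_1\le\cdots\le\lambda_n$ be positive integers. Set $G=Z_{p^{\lambda_1}}\times\cdots\times Z_{p^{\lambda_n}}$ and $G'=Z_{q^{\lambda_1}}\times\cdots\times Z_{q^{\lambda_n}}$. Then $\mathrm{Char}(G)\cong\mathrm{Char}(G')$.
   Context: $\mathrm{Char}(G)$ denotes the lattice of characteristic subgroups of $G$. *)

theory Defs
  imports "HOL-Algebra.Algebra"
begin

definition prime_power_type_group :: "nat \<Rightarrow> nat list \<Rightarrow> (nat \<Rightarrow> int) monoid" where
  "prime_power_type_group p lam =
     product_group {..<length lam} (\<lambda>i. integer_mod_group (p ^ (lam ! i)))"

definition characteristic :: "'a set \<Rightarrow> ('a, 'b) monoid_scheme \<Rightarrow> bool" where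
  "characteristic H G \<longleftrightarrow> subgroup H G \<and> (\<forall>\<phi> \<in> auto G. \<phi> ` H = H)"

definition Char :: "('a, 'b) monoid_scheme \<Rightarrow> 'a set set" where
  "Char G = {H. characteristic H G}"

text \<open>Lattice isomorphism of two lattices of sets ordered by inclusion
  (an order isomorphism, which for lattices is the same as a lattice isomorphism).\<close>
definition lattice_iso_sets :: "'a set set \<Rightarrow> 'b set set \<Rightarrow> bool" where
  "lattice_iso_sets L M \<longleftrightarrow>
     (\<exists>f. bij_betw f L M \<and> (\<forall>H\<in>L. \<forall>K\<in>L. H \<subseteq> K \<longleftrightarrow> f H \<subseteq> f K))"

end

theory Submission
  imports Defs
begin

text \<open>
  For odd \<open>p\<close>, the characteristic subgroups of
  \<open>G = \<int>/p\<^sup>\<lambda>\<^sub>1 \<times> \<dots> \<times> \<int>/p\<^sup>\<lambda>\<^sub>n\<close> are exactly the subgroups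
  \<open>{x. p\<^sup>a\<^sub>i dvd x\<^sub>i for all i}\<close> whose exponent vector satisfies
  \<open>a\<^sub>i \<le> \<lambda>\<^sub>i\<close> and \<open>a\<^sub>j \<le> a\<^sub>i + (\<lambda>\<^sub>j - \<lambda>\<^sub>i)\<close>.
  Every endomorphism preserves such a subgroup, because the image of the \<open>k\<close>-th generator has
  order dividing \<open>p\<^sup>\<lambda>\<^sub>k\<close>. Conversely, a characteristic subgroup is invariant under the
  automorphisms \<open>x\<^sub>j \<mapsto> x\<^sub>j + c x\<^sub>i\<close> (\<open>p\<^sup>\<lambda>\<^sub>j dvd c p\<^sup>\<lambda>\<^sub>i\<close>), which forces the
  inequalities between the minimal exponents it contains in each coordinate, and under negation
  of one coordinate, which (as \<open>2\<close> is invertible modulo \<open>p\<close>) shows that it contains the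
  coordinate components of its elements and is therefore determined by those exponents.
  Inclusion reverses the pointwise order of exponent vectors, and neither the admissible vectors
  nor this order depend on \<open>p\<close>.
\<close>

lemma mod_mult_mod_eq:
  fixes c s k m :: int
  assumes "m dvd c * k"
  shows "c * (s mod k) mod m = c * s mod m"
  by (metis assms mod_mod_cancel mult_mod_right)

lemma power_diff_dvd_if_power_dvd_mult:
  fixes x c :: "'a::idom"
  assumes "x ^ a dvd x ^ b * c" and "x \<noteq> 0"
  shows "x ^ (a - b) dvd c"
proof (cases "a \<le> b")
  case False
  then have "x ^ a = x ^ b * x ^ (a - b)"
    by (simp flip: power_add)
  with assms show ?thesis
    by simp
qed simp

lemma prime_power_part_mod:
  fixes p y :: int
  assumes p: "Factorial_Ring.prime p" and y: "y \<noteq> 0"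
  obtains w where "w * y mod p ^ l = p ^ multiplicity p y mod p ^ l"
proof -
  define v where "v = multiplicity p y"
  obtain u where yu: "y = p ^ v * u" and "\<not> p dvd u"
    using multiplicity_decompose'[OF y] p unfolding v_def by (metis not_prime_unit)
  then have "coprime u (p ^ l)"
    using p by (simp add: prime_imp_coprime coprime_commute)
  then obtain w t where wt: "w * u + t * p ^ l = 1"
    using bezout_int[of u "p ^ l"] by auto
  have "w * y = p ^ v * (w * u + t * p ^ l) + p ^ l * (- t * p ^ v)"
    unfolding yu by (simp add: algebra_simps)
  also have "\<dots> = p ^ v + p ^ l * (- t * p ^ v)"
    by (simp only: wt mult_1_right)
  finally have "w * y mod p ^ l = p ^ v mod p ^ l"
    by (simp only: mod_mult_self2)
  then show ?thesis
    using that unfolding v_def by blast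
qed

lemma (in group_hom) subgroup_vimage:
  assumes "subgroup K H"
  shows "subgroup (h -` K \<inter> carrier G) G"
proof (rule G.subgroupI)
  show "h -` K \<inter> carrier G \<noteq> {}"
    using subgroup.one_closed[OF assms] hom_one by force
qed (use subgroup.m_closed[OF assms] subgroup.m_inv_closed[OF assms] in auto)

locale zmod_product =
  fixes n :: nat and m :: "nat \<Rightarrow> nat"
  assumes modulus_pos: "0 < m i"
begin

abbreviation G :: "(nat \<Rightarrow> int) monoid" where
  "G \<equiv> product_group {..<n} (\<lambda>i. integer_mod_group (m i))"

lemma group_G: "group G"
  by simp

lemma carrier_integer_mod_group_modulus [simp]:
  "carrier (integer_mod_group (m i)) = {0..<int (m i)}"
  by (simp add: carrier_integer_mod_group modulus_pos[THEN gr_implies_not0])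

lemma carrier_G: "carrier G = (\<Pi>\<^sub>E i\<in>{..<n}. {0..<int (m i)})"
  by simp

lemma finite_carrier_G: "finite (carrier G)"
  unfolding carrier_G by (simp add: finite_PiE)

lemma mult_G: "x \<otimes>\<^bsub>G\<^esub> y = (\<lambda>i\<in>{..<n}. (x i + y i) mod m i)"
  by simp

lemma inv_G: "x \<in> carrier G \<Longrightarrow> inv\<^bsub>G\<^esub> x = (\<lambda>i\<in>{..<n}. - x i mod m i)"
  by (simp add: PiE_iff cong: restrict_cong)

lemma nat_pow_G:
  "x \<in> carrier G \<Longrightarrow> x [^]\<^bsub>G\<^esub> (t::nat) = (\<lambda>i\<in>{..<n}. int t * x i mod m i)"
proof (induction t)
  case 0
  then show ?case by (auto simp: carrier_G PiE_iff intro!: ext)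
next
  case (Suc t)
  then show ?case
    by (auto simp: carrier_G PiE_iff mod_add_left_eq mod_add_right_eq distrib_right add.commute intro!: ext)
qed

definition axis :: "nat \<Rightarrow> int \<Rightarrow> nat \<Rightarrow> int" where
  "axis i y = (\<lambda>k\<in>{..<n}. if k = i then y mod m i else 0)"

lemma axis_in_carrier: "axis i y \<in> carrier G"
  using modulus_pos unfolding carrier_G by (auto simp: axis_def)

lemma axis_cong: "(y::int) mod m i = (z::int) mod m i \<Longrightarrow> axis i y = axis i z"
  unfolding axis_def by (intro restrict_ext) simp

lemma axis_nat_pow: "axis i y [^]\<^bsub>G\<^esub> (t::nat) = axis i (int t * y)"
  by (subst nat_pow_G[OF axis_in_carrier]) (auto simp: axis_def mod_mult_right_eq intro!: ext)

lemma axis_modulus: "axis i (m i) = \<one>\<^bsub>G\<^esub>"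
  by (auto simp: axis_def)

lemma axis_multiple_closed:
  assumes "subgroup H G" and "axis i y \<in> H"
  shows "axis i (c * y) \<in> H"
proof -
  have "axis i y [^]\<^bsub>G\<^esub> nat (c mod m i) \<in> H"
    using group.subgroup_int_pow_closed[OF group_G assms, of "int (nat (c mod m i))"]
    by (simp only: int_pow_int)
  moreover have "axis i y [^]\<^bsub>G\<^esub> nat (c mod m i) = axis i (c * y)"
    using modulus_pos[of i] unfolding axis_nat_pow
    by (intro axis_cong) (simp add: mod_mult_left_eq)
  ultimately show ?thesis
    by simp
qed

lemma mem_subgroup_if_axes:
  assumes sg: "subgroup H G" and x: "x \<in> carrier G"
    and axes: "\<And>k. k < n \<Longrightarrow> axis k (x k) \<in> H"
  shows "x \<in> H"
proof -
  define prefix where "prefix l = (\<lambda>i\<in>{..<n}. if i < l then x i else 0)" for l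
  have "prefix l \<in> H" if "l \<le> n" for l
    using that
  proof (induction l)
    case 0
    then show ?case
      using subgroup.one_closed[OF sg] by (simp add: prefix_def restrict_def)
  next
    case (Suc l)
    have "prefix (Suc l) = prefix l \<otimes>\<^bsub>G\<^esub> axis l (x l)"
      using x Suc.prems unfolding carrier_G by (auto simp: prefix_def axis_def PiE_iff intro!: ext)
    moreover have "prefix l \<otimes>\<^bsub>G\<^esub> axis l (x l) \<in> H"
      using Suc by (intro subgroup.m_closed[OF sg] axes) simp_all
    ultimately show ?case
      by (simp only:)
  qed
  moreover have "prefix n = x"
    using x unfolding carrier_G by (auto simp: prefix_def PiE_iff extensional_def intro!: ext)
  ultimately show ?thesis
    by blast
qed

definition transvection :: "nat \<Rightarrow> nat \<Rightarrow> int \<Rightarrow> (nat \<Rightarrow> int) \<Rightarrow> nat \<Rightarrow> int" where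
  "transvection i j c =
     (\<lambda>x\<in>carrier G. \<lambda>k\<in>{..<n}. if k = j then (x j + c * x i) mod m j else x k)"

lemma transvection_in_carrier:
  "x \<in> carrier G \<Longrightarrow> j < n \<Longrightarrow> transvection i j c x \<in> carrier G"
  using modulus_pos unfolding carrier_G by (auto simp: transvection_def PiE_iff)

lemma transvection_hom:
  assumes i: "i < n" and j: "j < n" and dvd: "int (m j) dvd c * int (m i)"
  shows "transvection i j c \<in> hom G G"
proof (rule homI)
  fix x y assume x: "x \<in> carrier G" and y: "y \<in> carrier G"
  then have xy: "x \<otimes>\<^bsub>G\<^esub> y \<in> carrier G"
    by (rule monoid.m_closed[OF group.is_monoid[OF group_G]])
  have "c * ((x i + y i) mod m i) mod m j = c * (x i + y i) mod m j"
    by (rule mod_mult_mod_eq[OF dvd])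
  then have "((x j + y j) mod m j + c * ((x i + y i) mod m i)) mod m j
      = (x j + y j + c * (x i + y i)) mod m j"
    by (intro mod_add_cong) simp_all
  also have "\<dots> = (x j + c * x i + (y j + c * y i)) mod m j"
    by (simp add: algebra_simps)
  also have "\<dots> = ((x j + c * x i) mod m j + (y j + c * y i) mod m j) mod m j"
    by (rule mod_add_eq[symmetric])
  finally have "((x j + y j) mod m j + c * ((x i + y i) mod m i)) mod m j
      = ((x j + c * x i) mod m j + (y j + c * y i) mod m j) mod m j" .
  then show "transvection i j c (x \<otimes>\<^bsub>G\<^esub> y) = transvection i j c x \<otimes>\<^bsub>G\<^esub> transvection i j c y"
    using x y xy i j by (auto simp: transvection_def intro!: restrict_ext)
qed (use transvection_in_carrier j in auto)

lemma transvection_inverse: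
  assumes x: "x \<in> carrier G" and i: "i < n" and j: "j < n" and ij: "i \<noteq> j \<or> c = -2"
  shows "transvection i j (if i = j then c else - c) (transvection i j c x) = x"
proof -
  have "x k = x k mod m k" if "k < n" for k
    using x that unfolding carrier_G by (auto simp: PiE_iff)
  then show ?thesis
    using x i j ij transvection_in_carrier[OF x j]
    unfolding carrier_G
    by (auto simp: transvection_def mod_simps PiE_iff extensional_def intro!: ext)
qed

lemma transvection_auto:
  assumes i: "i < n" and j: "j < n" and dvd: "int (m j) dvd c * int (m i)"
    and ij: "i \<noteq> j \<or> c = -2" \<comment> \<open>for \<open>i = j\<close>, \<open>c = -2\<close> the map negates the \<open>j\<close>-th coordinate\<close>
  shows "transvection i j c \<in> auto G"
proof -
  let ?c' = "if i = j then c else - c"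
  have "bij_betw (transvection i j c) (carrier G) (carrier G)"
  proof (rule bij_betw_byWitness[where f' = "transvection i j ?c'"])
    show "\<forall>x\<in>carrier G. transvection i j ?c' (transvection i j c x) = x"
      using transvection_inverse i j ij by blast
    show "\<forall>x\<in>carrier G. transvection i j c (transvection i j ?c' x) = x"
      using transvection_inverse[of _ i j ?c'] i j ij by (auto split: if_splits)
  qed (use transvection_in_carrier j in blast)+
  then show ?thesis
    using transvection_hom[OF i j dvd] by (auto simp: auto_def BijGroup_def Bij_def transvection_def)
qed

lemma transvection_div_self:
  assumes x: "x \<in> carrier G" and j: "j < n"
  shows "transvection i j c x \<otimes>\<^bsub>G\<^esub> inv\<^bsub>G\<^esub> x = axis j (c * x i)"
  unfolding inv_G[OF x] mult_G axis_def
proof (rule restrict_ext)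
  fix k assume "k \<in> {..<n}"
  then show "(transvection i j c x k + (\<lambda>k\<in>{..<n}. - x k mod m k) k) mod m k =
      (if k = j then c * x i mod m j else 0)"
    using x j by (cases "k = j") (simp_all add: transvection_def mod_simps)
qed

lemma characteristic_axis_mem:
  assumes H: "characteristic H G" and h: "h \<in> H" and i: "i < n" and j: "j < n"
    and dvd: "int (m j) dvd c * int (m i)" and ij: "i \<noteq> j \<or> c = -2"
  shows "axis j (c * h i) \<in> H"
proof -
  have sg: "subgroup H G" and "transvection i j c ` H = H"
    using H transvection_auto[OF i j dvd ij] by (auto simp: characteristic_def)
  then have "transvection i j c h \<otimes>\<^bsub>G\<^esub> inv\<^bsub>G\<^esub> h \<in> H"
    using h by (blast intro: subgroup.m_closed[OF sg] subgroup.m_inv_closed[OF sg])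
  then show ?thesis
    using transvection_div_self[OF subgroup.mem_carrier[OF sg h] j] by simp
qed

lemma characteristic_axis_component:
  assumes H: "characteristic H G" and h: "h \<in> H" and i: "i < n" and odd: "odd (m i)"
  shows "axis i (h i) \<in> H"
proof -
  have sg: "subgroup H G"
    using H by (simp add: characteristic_def)
  have "axis i (-2 * h i) \<in> H"
    using characteristic_axis_mem[OF H h i i] by simp
  \<comment> \<open>\<open>(m\<^sub>i - 1) div 2\<close> inverts \<open>-2\<close> modulo the odd \<open>m\<^sub>i\<close>\<close>
  then have "axis i ((int (m i) - 1) div 2 * (-2 * h i)) \<in> H"
    by (rule axis_multiple_closed[OF sg])
  moreover have "(int (m i) - 1) div 2 * (-2 * h i) = h i + int (m i) * - h i"
    using odd by (auto elim!: oddE simp: algebra_simps)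
  ultimately show ?thesis
    by (metis axis_cong mod_mult_self2)
qed

lemma hom_axis_one_dvd:
  assumes \<phi>: "\<phi> \<in> hom G G" and k: "k < n" and j: "j < n"
  shows "int (m j) dvd int (m k) * \<phi> (axis k 1) j"
proof -
  have "\<phi> (axis k 1) [^]\<^bsub>G\<^esub> m k = \<phi> (axis k 1 [^]\<^bsub>G\<^esub> m k)"
    using hom_nat_pow[OF \<phi> axis_in_carrier group_G group_G] by simp
  also have "\<dots> = \<one>\<^bsub>G\<^esub>"
    using hom_one[OF \<phi> group_G group_G] axis_modulus by (simp add: axis_nat_pow)
  finally have "(\<lambda>i\<in>{..<n}. int (m k) * \<phi> (axis k 1) i mod m i) = \<one>\<^bsub>G\<^esub>"
    using nat_pow_G[OF hom_in_carrier[OF \<phi> axis_in_carrier]] by simp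
  then show ?thesis
    using j by (auto dest!: fun_cong[where x = j] simp: mod_eq_0_iff_dvd)
qed

end

text \<open>With truncated subtraction the condition reads \<open>a\<^sub>j \<le> a\<^sub>i\<close> whenever
  \<open>\<lambda>\<^sub>j \<le> \<lambda>\<^sub>i\<close>, so no ordering or positivity of the \<open>\<lambda>\<^sub>i\<close> is needed.\<close>

definition admissible_exponents :: "nat list \<Rightarrow> (nat \<Rightarrow> nat) set" where
  "admissible_exponents lam =
     {a \<in> (\<Pi>\<^sub>E i\<in>{..<length lam}. {..lam ! i}).
        \<forall>i<length lam. \<forall>j<length lam. a j \<le> a i + (lam ! j - lam ! i)}"

lemma admissible_exponents_le:
  "a \<in> admissible_exponents lam \<Longrightarrow> i < length lam \<Longrightarrow> a i \<le> lam ! i"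
  by (auto simp: admissible_exponents_def PiE_iff)

locale prime_power_product =
  fixes p :: nat and lam :: "nat list"
  assumes prime_p: "Factorial_Ring.prime p"

sublocale prime_power_product \<subseteq> zmod_product "length lam" "\<lambda>i. p ^ (lam ! i)"
  using prime_p by unfold_locales (simp add: prime_gt_0_nat)

context prime_power_product
begin

lemma prime_power_type_group_eq: "prime_power_type_group p lam = G"
  by (simp add: prime_power_type_group_def)

lemma p_pos [simp]: "0 < p"
  using prime_p by (simp add: prime_gt_0_nat)

lemma int_p_gt_1: "1 < int p"
  using prime_p prime_gt_1_nat by simp

lemma power_dvd_power_iff: "int p ^ a dvd int p ^ b \<longleftrightarrow> a \<le> b"
  using int_p_gt_1 by (simp add: dvd_power_iff)

definition exponent_subgroup :: "(nat \<Rightarrow> nat) \<Rightarrow> (nat \<Rightarrow> int) set" where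
  "exponent_subgroup a = {x \<in> carrier G. \<forall>i<length lam. int p ^ a i dvd x i}"

lemma subgroup_exponent_subgroup:
  assumes "\<And>i. i < length lam \<Longrightarrow> a i \<le> lam ! i"
  shows "subgroup (exponent_subgroup a) G"
proof (rule group.subgroupI[OF group_G])
  have dvd_mod: "int p ^ a i dvd z mod (int p ^ (lam ! i)) \<longleftrightarrow> int p ^ a i dvd z"
    if "i < length lam" for i z
    using assms that by (simp add: dvd_mod_iff power_dvd_power_iff)
  show "inv\<^bsub>G\<^esub> x \<in> exponent_subgroup a" if x: "x \<in> exponent_subgroup a" for x
  proof -
    have "x \<in> carrier G"
      using x by (simp add: exponent_subgroup_def)
    then show ?thesis
      using x unfolding inv_G[OF \<open>x \<in> carrier G\<close>]
      by (auto simp: exponent_subgroup_def dvd_mod)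
  qed
  show "x \<otimes>\<^bsub>G\<^esub> y \<in> exponent_subgroup a"
    if "x \<in> exponent_subgroup a" "y \<in> exponent_subgroup a" for x y
    using that monoid.m_closed[OF group.is_monoid[OF group_G]]
    by (auto simp: exponent_subgroup_def dvd_mod)
  show "exponent_subgroup a \<noteq> {}"
    by (auto simp: exponent_subgroup_def intro!: exI[of _ "\<lambda>i\<in>{..<length lam}. 0"])
qed (auto simp: exponent_subgroup_def)

lemma axis_mem_exponent_subgroup:
  assumes "i < length lam" and "a i \<le> lam ! i"
  shows "axis i y \<in> exponent_subgroup a \<longleftrightarrow> int p ^ a i dvd y"
  using assms axis_in_carrier
  by (auto simp: exponent_subgroup_def axis_def dvd_mod_iff power_dvd_power_iff)

lemma exponent_subgroup_subset_iff:
  assumes "\<And>i. i < length lam \<Longrightarrow> a i \<le> lam ! i" and "\<And>i. i < length lam \<Longrightarrow> b i \<le> lam ! i"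
  shows "exponent_subgroup a \<subseteq> exponent_subgroup b \<longleftrightarrow> (\<forall>i<length lam. b i \<le> a i)"
proof
  assume sub: "exponent_subgroup a \<subseteq> exponent_subgroup b"
  show "\<forall>i<length lam. b i \<le> a i"
  proof (intro allI impI)
    fix i assume i: "i < length lam"
    then have "axis i (int p ^ a i) \<in> exponent_subgroup a"
      using assms(1) by (simp add: axis_mem_exponent_subgroup)
    then have "axis i (int p ^ a i) \<in> exponent_subgroup b"
      using sub by blast
    then show "b i \<le> a i"
      using i assms(2) by (simp add: axis_mem_exponent_subgroup power_dvd_power_iff)
  qed
next
  assume "\<forall>i<length lam. b i \<le> a i"
  then show "exponent_subgroup a \<subseteq> exponent_subgroup b"
    by (auto simp: exponent_subgroup_def intro: dvd_trans[OF le_imp_power_dvd])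
qed

lemma hom_axis_mem_exponent_subgroup:
  assumes \<phi>: "\<phi> \<in> hom G G" and a: "a \<in> admissible_exponents lam" and k: "k < length lam"
    and y: "0 \<le> y" "int p ^ a k dvd y"
  shows "\<phi> (axis k y) \<in> exponent_subgroup a"
proof -
  have e: "\<phi> (axis k 1) \<in> carrier G"
    using \<phi> axis_in_carrier by (rule hom_in_carrier)
  have "axis k y = axis k 1 [^]\<^bsub>G\<^esub> nat y"
    using y(1) by (simp add: axis_nat_pow)
  then have "\<phi> (axis k y) = \<phi> (axis k 1) [^]\<^bsub>G\<^esub> nat y"
    by (metis hom_nat_pow[OF \<phi> axis_in_carrier group_G group_G])
  also have "\<dots> \<in> exponent_subgroup a"
  proof -
    have "int p ^ a j dvd y * \<phi> (axis k 1) j mod int p ^ (lam ! j)"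
      if j: "j < length lam" for j
    proof -
      have "int p ^ (lam ! j - lam ! k) dvd \<phi> (axis k 1) j"
        using hom_axis_one_dvd[OF \<phi> k j] int_p_gt_1
        by (intro power_diff_dvd_if_power_dvd_mult) simp_all
      then have "int p ^ (a k + (lam ! j - lam ! k)) dvd y * \<phi> (axis k 1) j"
        unfolding power_add using y(2) by (rule mult_dvd_mono[rotated])
      moreover have "a j \<le> a k + (lam ! j - lam ! k)"
        using a j k by (simp add: admissible_exponents_def)
      ultimately show ?thesis
        using admissible_exponents_le[OF a j]
        by (simp add: dvd_mod_iff power_dvd_power_iff dvd_trans[OF le_imp_power_dvd])
    qed
    then show ?thesis
      using y e unfolding nat_pow_G[OF e] by (auto simp: exponent_subgroup_def mult.commute)
  qed
  finally show ?thesis .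
qed

lemma hom_exponent_subgroup:
  assumes \<phi>: "\<phi> \<in> hom G G" and a: "a \<in> admissible_exponents lam"
    and x: "x \<in> exponent_subgroup a"
  shows "\<phi> x \<in> exponent_subgroup a"
proof -
  let ?K = "\<phi> -` exponent_subgroup a \<inter> carrier G"
  have K: "subgroup ?K G"
    using \<phi> subgroup_exponent_subgroup[OF admissible_exponents_le[OF a]]
    by (intro group_hom.subgroup_vimage) (simp_all add: group_hom_def group_hom_axioms_def)
  have "x \<in> ?K"
  proof (rule mem_subgroup_if_axes[OF K])
    show "x \<in> carrier G"
      using x by (simp add: exponent_subgroup_def)
    show "axis k (x k) \<in> ?K" if k: "k < length lam" for k
      using x k hom_axis_mem_exponent_subgroup[OF \<phi> a k] axis_in_carrier
      by (auto simp: exponent_subgroup_def PiE_iff)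
  qed
  then show ?thesis
    by blast
qed

lemma characteristic_exponent_subgroup:
  assumes a: "a \<in> admissible_exponents lam"
  shows "characteristic (exponent_subgroup a) G"
  unfolding characteristic_def
proof
  show "subgroup (exponent_subgroup a) G"
    using admissible_exponents_le[OF a] by (rule subgroup_exponent_subgroup)
  show "\<forall>\<phi>\<in>auto G. \<phi> ` exponent_subgroup a = exponent_subgroup a"
  proof
    fix \<phi> assume "\<phi> \<in> auto G"
    then have \<phi>: "\<phi> \<in> hom G G" and inj: "inj_on \<phi> (carrier G)"
      by (auto simp: auto_def Bij_def bij_betw_def)
    from inj have "inj_on \<phi> (exponent_subgroup a)"
      by (rule inj_on_subset) (auto simp: exponent_subgroup_def)
    moreover have "finite (exponent_subgroup a)"
      using finite_carrier_G by (rule rev_finite_subset) (auto simp: exponent_subgroup_def)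
    ultimately show "\<phi> ` exponent_subgroup a = exponent_subgroup a"
      using hom_exponent_subgroup[OF \<phi> a] endo_inj_surj by blast
  qed
qed

definition min_exponent :: "(nat \<Rightarrow> int) set \<Rightarrow> nat \<Rightarrow> nat" where
  "min_exponent H i = (LEAST k. axis i (int p ^ k) \<in> H)"

lemma
  assumes "subgroup H G"
  shows axis_min_exponent_mem: "axis i (int p ^ min_exponent H i) \<in> H"
    and min_exponent_le: "min_exponent H i \<le> lam ! i"
proof -
  have "axis i (int p ^ (lam ! i)) \<in> H"
    using axis_modulus[of i] subgroup.one_closed[OF assms] by simp
  then show "axis i (int p ^ min_exponent H i) \<in> H" "min_exponent H i \<le> lam ! i"
    unfolding min_exponent_def by (auto intro: LeastI Least_le)
qed

lemma axis_mem_subgroup_iff: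
  assumes sg: "subgroup H G"
  shows "axis i y \<in> H \<longleftrightarrow> int p ^ min_exponent H i dvd y"
proof
  assume "int p ^ min_exponent H i dvd y"
  then obtain z where "y = z * int p ^ min_exponent H i"
    by (metis dvd_def mult.commute)
  then show "axis i y \<in> H"
    using axis_multiple_closed[OF sg axis_min_exponent_mem[OF sg]] by simp
next
  assume y: "axis i y \<in> H"
  show "int p ^ min_exponent H i dvd y"
  proof (cases "y = 0")
    case False
    have "Factorial_Ring.prime (int p)"
      using prime_p by simp
    then obtain w where "w * y mod int p ^ (lam ! i) = int p ^ multiplicity (int p) y mod int p ^ (lam ! i)"
      using prime_power_part_mod False by blast
    then have "axis i (int p ^ multiplicity (int p) y) = axis i (w * y)"
      by (intro axis_cong) simp
    then have "axis i (int p ^ multiplicity (int p) y) \<in> H"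
      using axis_multiple_closed[OF sg y] by simp
    then have "min_exponent H i \<le> multiplicity (int p) y"
      unfolding min_exponent_def by (rule Least_le)
    then show ?thesis
      using multiplicity_dvd[of "int p" y] by (meson dvd_trans le_imp_power_dvd)
  qed simp
qed

definition min_exponents :: "(nat \<Rightarrow> int) set \<Rightarrow> nat \<Rightarrow> nat" where
  "min_exponents H = (\<lambda>i\<in>{..<length lam}. min_exponent H i)"

lemma min_exponents_admissible:
  assumes H: "characteristic H G"
  shows "min_exponents H \<in> admissible_exponents lam"
proof -
  have sg: "subgroup H G"
    using H by (simp add: characteristic_def)
  have "min_exponent H j \<le> min_exponent H i + (lam ! j - lam ! i)"
    if i: "i < length lam" and j: "j < length lam" for i j
  proof (cases "i = j")
    case False
    let ?a = "min_exponent H i" and ?c = "int p ^ (lam ! j - lam ! i)"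
    have dvd: "int p ^ (lam ! j) dvd ?c * int p ^ (lam ! i)"
      by (simp add: le_imp_power_dvd flip: power_add)
    have "axis j (?c * axis i (int p ^ ?a) i) \<in> H"
      using characteristic_axis_mem[OF H axis_min_exponent_mem[OF sg] i j, of ?c] dvd False by simp
    moreover have "axis j (?c * axis i (int p ^ ?a) i) = axis j (int p ^ (?a + (lam ! j - lam ! i)))"
      using i mod_mult_mod_eq[OF dvd, of "int p ^ ?a"]
      by (intro axis_cong) (simp add: axis_def power_add mult.commute)
    ultimately show ?thesis
      by (simp add: axis_mem_subgroup_iff[OF sg] power_dvd_power_iff)
  qed simp
  then show ?thesis
    using min_exponent_le[OF sg]
    by (auto simp: admissible_exponents_def min_exponents_def)
qed

lemma characteristic_eq_exponent_subgroup:
  assumes H: "characteristic H G" and odd: "odd p"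
  shows "H = exponent_subgroup (min_exponents H)"
proof -
  have sg: "subgroup H G"
    using H by (simp add: characteristic_def)
  show ?thesis
  proof (intro equalityI subsetI)
    fix x
    assume x: "x \<in> H"
    have "int p ^ min_exponent H i dvd x i" if "i < length lam" for i
      using characteristic_axis_component[OF H x that] odd by (simp add: axis_mem_subgroup_iff[OF sg])
    then show "x \<in> exponent_subgroup (min_exponents H)"
      using subgroup.mem_carrier[OF sg x] by (simp add: exponent_subgroup_def min_exponents_def)
  next
    fix x
    assume x: "x \<in> exponent_subgroup (min_exponents H)"
    show "x \<in> H"
    proof (rule mem_subgroup_if_axes[OF sg])
      show "x \<in> carrier G"
        using x by (simp add: exponent_subgroup_def)
      show "axis k (x k) \<in> H" if "k < length lam" for k
        using x that by (simp add: exponent_subgroup_def min_exponents_def axis_mem_subgroup_iff[OF sg])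
    qed
  qed
qed

lemma Char_eq_exponent_subgroups:
  assumes "odd p"
  shows "Char G = exponent_subgroup ` admissible_exponents lam"
  using characteristic_eq_exponent_subgroup[OF _ assms] min_exponents_admissible
    characteristic_exponent_subgroup
  unfolding Char_def by blast

end

lemma lattice_iso_sets_imageI:
  assumes "\<And>a b. a \<in> A \<Longrightarrow> b \<in> A \<Longrightarrow> f a \<subseteq> f b \<longleftrightarrow> g a \<subseteq> g b"
  shows "lattice_iso_sets (f ` A) (g ` A)"
proof -
  define h where "h = g \<circ> inv_into A f"
  have h: "h (f a) = g a" if a: "a \<in> A" for a
  proof -
    define a' where "a' = inv_into A f (f a)"
    have "f a \<in> f ` A"
      using a by blast
    then have "a' \<in> A" and "f a' = f a"
      unfolding a'_def by (rule inv_into_into, rule f_inv_into_f)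
    then have "g a' = g a"
      using assms[OF _ a] assms[OF a] by blast
    then show ?thesis
      by (simp add: h_def a'_def)
  qed
  have "inj_on h (f ` A)"
  proof (rule inj_onI)
    fix H K
    assume "H \<in> f ` A" "K \<in> f ` A" "h H = h K"
    then obtain a b where "a \<in> A" "b \<in> A" "H = f a" "K = f b" "g a = g b"
      using h by auto
    then show "H = K"
      using assms by (metis subset_antisym order_refl)
  qed
  moreover have "h ` f ` A = g ` A"
    using h by (simp add: image_image cong: image_cong)
  moreover have "\<forall>H\<in>f ` A. \<forall>K\<in>f ` A. H \<subseteq> K \<longleftrightarrow> h H \<subseteq> h K"
    using h assms by simp
  ultimately show ?thesis
    unfolding lattice_iso_sets_def bij_betw_def by blast
qed

theorem mainTheorem7:
  fixes p q :: nat and lam :: "nat list"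
  assumes "Factorial_Ring.prime p" and "p \<noteq> 2" and "Factorial_Ring.prime q" and "q \<noteq> 2"
    and "sorted lam" and "\<forall>l \<in> set lam. 0 < l"
  shows "lattice_iso_sets (Char (prime_power_type_group p lam))
                          (Char (prime_power_type_group q lam))"
proof -
  interpret P: prime_power_product p lam
    using assms(1) by unfold_locales
  interpret Q: prime_power_product q lam
    using assms(3) by unfold_locales
  have "2 < p" "2 < q"
    using prime_ge_2_nat[OF assms(1)] prime_ge_2_nat[OF assms(3)] assms(2,4) by linarith+
  then have "odd p" "odd q"
    using assms(1,3) prime_odd_nat by blast+
  show ?thesis
    unfolding P.prime_power_type_group_eq Q.prime_power_type_group_eq
      P.Char_eq_exponent_subgroups[OF \<open>odd p\<close>] Q.Char_eq_exponent_subgroups[OF \<open>odd q\<close>]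
    by (rule lattice_iso_sets_imageI)
      (simp add: P.exponent_subgroup_subset_iff Q.exponent_subgroup_subset_iff admissible_exponents_le)
qed

end
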